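(* Let $X$ be an infinite compact metrizable space and $h\colon X\to X$ a minimal homeomorphism. (1) If $F_1,F_2\subset X$ are closed and $V_1,V_2\subset X$ are open with $F_1\prec V_1$, $F_2\prec V_2$ and $V_1\cap V_2=\varnothing$, then $F_1\cup F_2\prec V_1\cup V_2$. (2) The union of finitely many thin sets in $X$ is thin.
   Context: For $F\subset X$ closed and $U\subset X$ open, write $F\prec U$ if there exist $M\in\mathbb{N}$, open sets $U_0,\dots,U_M\subset X$ and integers $d(0),\dots,d(M)$ such that $F\subset\bigcup_{j=0}^M U_j$, $h^{d(j)}(U_j)\subset U$ for all $j$, and the sets $h^{d(j)}(U_j)$ are pairwise disjoint. A closed set $F$ is thin if $F\prec U$ for every non-empty open $U\subset X$. *)

theory Defs
  imports "HOL-Analysis.Analysis"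
begin

definition hpow :: "('a \<Rightarrow> 'a) \<Rightarrow> int \<Rightarrow> 'a \<Rightarrow> 'a" where
  "hpow h d = (if d \<ge> 0 then h ^^ nat d else (inv h) ^^ nat (- d))"

definition minimal_homeo :: "('a::topological_space \<Rightarrow> 'a) \<Rightarrow> bool" where
  "minimal_homeo h \<longleftrightarrow> (\<exists>g. homeomorphism UNIV UNIV h g) \<and>
     (\<forall>E. closed E \<and> h ` E = E \<longrightarrow> E = {} \<or> E = UNIV)"

definition prec :: "('a::topological_space \<Rightarrow> 'a) \<Rightarrow> 'a set \<Rightarrow> 'a set \<Rightarrow> bool" where
  "prec h F U \<longleftrightarrow> (\<exists>(M::nat) (Us::nat \<Rightarrow> 'a set) (d::nat \<Rightarrow> int).
      (\<forall>j\<le>M. open (Us j)) \<and>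
      F \<subseteq> (\<Union>j\<le>M. Us j) \<and>
      (\<forall>j\<le>M. hpow h (d j) ` Us j \<subseteq> U) \<and>
      (\<forall>i\<le>M. \<forall>j\<le>M. i \<noteq> j \<longrightarrow> hpow h (d i) ` Us i \<inter> hpow h (d j) ` Us j = {}))"

definition thin :: "('a::topological_space \<Rightarrow> 'a) \<Rightarrow> 'a set \<Rightarrow> bool" where
  "thin h F \<longleftrightarrow> closed F \<and> (\<forall>U. open U \<and> U \<noteq> {} \<longrightarrow> prec h F U)"

end

theory Submission
  imports Defs
begin

text \<open>For (1), the witnessing families for \<open>F\<^sub>1 \<prec> V\<^sub>1\<close> and \<open>F\<^sub>2 \<prec> V\<^sub>2\<close>
are concatenated; pieces from different families have disjoint images because
\<open>V\<^sub>1 \<inter> V\<^sub>2 = {}\<close>. For (2), the set of isolated points is open and invariant under the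
minimal homeomorphism, hence empty, since otherwise the compact space would be discrete and thus
finite. So every non-empty open \<open>U\<close> contains disjoint non-empty open \<open>V\<^sub>1, V\<^sub>2\<close>, and
for thin \<open>A, B\<close> part (1) gives \<open>A \<union> B \<prec> V\<^sub>1 \<union> V\<^sub>2 \<subseteq> U\<close>.\<close>

definition append_family :: "nat \<Rightarrow> (nat \<Rightarrow> 'a) \<Rightarrow> (nat \<Rightarrow> 'a) \<Rightarrow> nat \<Rightarrow> 'a" where
  "append_family M1 f g j = (if j \<le> M1 then f j else g (j - Suc M1))"

lemma append_family_all_iff:
  "(\<forall>j\<le>M1 + Suc M2. P (append_family M1 f g j)) \<longleftrightarrow> (\<forall>j\<le>M1. P (f j)) \<and> (\<forall>j\<le>M2. P (g j))"
proof
  assume all: "\<forall>j\<le>M1 + Suc M2. P (append_family M1 f g j)"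
  show "(\<forall>j\<le>M1. P (f j)) \<and> (\<forall>j\<le>M2. P (g j))"
  proof (intro conjI allI impI)
    fix j assume "j \<le> M1"
    then show "P (f j)"
      using all[rule_format, of j] by (simp add: append_family_def)
  next
    fix j assume "j \<le> M2"
    then show "P (g j)"
      using all[rule_format, of "j + Suc M1"] by (simp add: append_family_def)
  qed
next
  assume "(\<forall>j\<le>M1. P (f j)) \<and> (\<forall>j\<le>M2. P (g j))"
  then show "\<forall>j\<le>M1 + Suc M2. P (append_family M1 f g j)"
    by (simp add: append_family_def)
qed

lemma UN_append_family:
  "(\<Union>j\<le>M1 + Suc M2. append_family M1 f g j) = (\<Union>j\<le>M1. f j) \<union> (\<Union>j\<le>M2. g j)"
proof (intro equalityI subsetI)
  fix x assume "x \<in> (\<Union>j\<le>M1 + Suc M2. append_family M1 f g j)"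
  then obtain j where "j \<le> M1 + Suc M2" "x \<in> append_family M1 f g j"
    by blast
  then show "x \<in> (\<Union>j\<le>M1. f j) \<union> (\<Union>j\<le>M2. g j)"
    by (cases "j \<le> M1") (auto simp: append_family_def)
next
  fix x assume "x \<in> (\<Union>j\<le>M1. f j) \<union> (\<Union>j\<le>M2. g j)"
  then consider j where "j \<le> M1" "x \<in> append_family M1 f g j"
    | j where "j + Suc M1 \<le> M1 + Suc M2" "x \<in> append_family M1 f g (j + Suc M1)"
    by (auto simp: append_family_def)
  then show "x \<in> (\<Union>j\<le>M1 + Suc M2. append_family M1 f g j)"
    by cases auto
qed

lemma append_family_disjoint:
  assumes "\<forall>i\<le>M1. \<forall>j\<le>M1. i \<noteq> j \<longrightarrow> f i \<inter> f j = {}"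
    and "\<forall>i\<le>M2. \<forall>j\<le>M2. i \<noteq> j \<longrightarrow> g i \<inter> g j = {}"
    and "\<forall>j\<le>M1. f j \<subseteq> V1" "\<forall>j\<le>M2. g j \<subseteq> V2" "V1 \<inter> V2 = {}"
  shows "\<forall>i\<le>M1 + Suc M2. \<forall>j\<le>M1 + Suc M2. i \<noteq> j \<longrightarrow>
    append_family M1 f g i \<inter> append_family M1 f g j = {}"
proof (intro allI impI)
  fix i j assume ij: "i \<le> M1 + Suc M2" "j \<le> M1 + Suc M2" "i \<noteq> j"
  have in_V1: "append_family M1 f g k \<subseteq> V1" if "k \<le> M1" for k
    using assms(3) that by (simp add: append_family_def)
  have in_V2: "append_family M1 f g k \<subseteq> V2" if "k \<le> M1 + Suc M2" "\<not> k \<le> M1" for k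
    using assms(4) that by (simp add: append_family_def)
  show "append_family M1 f g i \<inter> append_family M1 f g j = {}"
  proof (cases "i \<le> M1"; cases "j \<le> M1")
    assume "i \<le> M1" "j \<le> M1"
    then show ?thesis
      using assms(1) ij(3) by (simp add: append_family_def)
  next
    assume "i \<le> M1" "\<not> j \<le> M1"
    then show ?thesis
      using in_V1[of i] in_V2[of j] ij(2) assms(5) by blast
  next
    assume "\<not> i \<le> M1" "j \<le> M1"
    then show ?thesis
      using in_V2[of i] in_V1[of j] ij(1) assms(5) by blast
  next
    assume "\<not> i \<le> M1" "\<not> j \<le> M1"
    moreover have "i - Suc M1 \<noteq> j - Suc M1" "i - Suc M1 \<le> M2" "j - Suc M1 \<le> M2"
      using calculation ij by simp_all
    ultimately show ?thesis
      using assms(2) by (simp add: append_family_def)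
  qed
qed

lemma precE:
  fixes h :: "'a::topological_space \<Rightarrow> 'a"
  assumes "prec h F U"
  obtains M :: nat and Us :: "nat \<Rightarrow> 'a set" and d :: "nat \<Rightarrow> int"
  where "\<forall>j\<le>M. open (Us j)" "F \<subseteq> (\<Union>j\<le>M. Us j)"
    "\<forall>j\<le>M. hpow h (d j) ` Us j \<subseteq> U"
    "\<forall>i\<le>M. \<forall>j\<le>M. i \<noteq> j \<longrightarrow> hpow h (d i) ` Us i \<inter> hpow h (d j) ` Us j = {}"
  using assms unfolding prec_def by (elim exE conjE) (rule that, assumption+)

lemma prec_Un:
  fixes h :: "'a::topological_space \<Rightarrow> 'a"
  assumes "prec h F1 V1" "prec h F2 V2" "V1 \<inter> V2 = {}"
  shows "prec h (F1 \<union> F2) (V1 \<union> V2)"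
proof -
  obtain M1 :: nat and U1 d1 where A: "\<forall>j\<le>M1. open (U1 j)" "F1 \<subseteq> (\<Union>j\<le>M1. U1 j)"
    "\<forall>j\<le>M1. hpow h (d1 j) ` U1 j \<subseteq> V1"
    "\<forall>i\<le>M1. \<forall>j\<le>M1. i \<noteq> j \<longrightarrow> hpow h (d1 i) ` U1 i \<inter> hpow h (d1 j) ` U1 j = {}"
    using assms(1) by (rule precE)
  obtain M2 :: nat and U2 d2 where B: "\<forall>j\<le>M2. open (U2 j)" "F2 \<subseteq> (\<Union>j\<le>M2. U2 j)"
    "\<forall>j\<le>M2. hpow h (d2 j) ` U2 j \<subseteq> V2"
    "\<forall>i\<le>M2. \<forall>j\<le>M2. i \<noteq> j \<longrightarrow> hpow h (d2 i) ` U2 i \<inter> hpow h (d2 j) ` U2 j = {}"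
    using assms(2) by (rule precE)
  define M where "M = M1 + Suc M2"
  define U where "U = append_family M1 U1 U2"
  define d where "d = append_family M1 d1 d2"
  have images: "hpow h (d j) ` U j = append_family M1 (\<lambda>j. hpow h (d1 j) ` U1 j)
      (\<lambda>j. hpow h (d2 j) ` U2 j) j" for j
    by (simp add: U_def d_def append_family_def)
  have "\<forall>j\<le>M. open (U j)"
    unfolding M_def U_def append_family_all_iff[where P = "open"] using A(1) B(1) by blast
  moreover have "F1 \<union> F2 \<subseteq> (\<Union>j\<le>M. U j)"
    unfolding M_def U_def UN_append_family using A(2) B(2) by blast
  moreover have "\<forall>j\<le>M. hpow h (d j) ` U j \<subseteq> V1 \<union> V2"
    unfolding images M_def append_family_all_iff[where P = "\<lambda>X. X \<subseteq> V1 \<union> V2"]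
    using A(3) B(3) by blast
  moreover have "\<forall>i\<le>M. \<forall>j\<le>M. i \<noteq> j \<longrightarrow> hpow h (d i) ` U i \<inter> hpow h (d j) ` U j = {}"
    unfolding images M_def using A(4) B(4) A(3) B(3) assms(3) by (rule append_family_disjoint)
  ultimately show ?thesis
    unfolding prec_def by (intro exI[of _ M] exI[of _ U] exI[of _ d]) blast
qed

lemma prec_mono:
  fixes h :: "'a::topological_space \<Rightarrow> 'a"
  assumes "prec h F U" "U \<subseteq> W"
  shows "prec h F W"
proof -
  obtain M :: nat and Us d where "\<forall>j\<le>M. open (Us j)" "F \<subseteq> (\<Union>j\<le>M. Us j)"
    "\<forall>j\<le>M. hpow h (d j) ` Us j \<subseteq> U"
    "\<forall>i\<le>M. \<forall>j\<le>M. i \<noteq> j \<longrightarrow> hpow h (d i) ` Us i \<inter> hpow h (d j) ` Us j = {}"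
    using assms(1) by (rule precE)
  moreover from this(3) have "\<forall>j\<le>M. hpow h (d j) ` Us j \<subseteq> W"
    using assms(2) by blast
  ultimately show ?thesis
    unfolding prec_def by (intro exI[of _ M] exI[of _ Us] exI[of _ d]) blast
qed

lemma prec_empty: "prec h {} U"
  unfolding prec_def by (intro exI[of _ 0] exI[of _ "\<lambda>_. {}"]) auto

lemma homeomorphism_open_singleton_iff:
  fixes h :: "'a::topological_space \<Rightarrow> 'a"
  assumes "homeomorphism UNIV UNIV h g"
  shows "open {h x} \<longleftrightarrow> open {x}"
proof
  assume "open {x}"
  then show "open {h x}"
    using homeomorphism_imp_open_map[OF assms, of "{x}"] by simp
next
  assume "open {h x}"
  then have "open (g ` {h x})"
    using homeomorphism_imp_open_map[OF homeomorphism_symD[OF assms], of "{h x}"] by simp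
  then show "open {x}"
    using assms by (simp add: homeomorphism_def)
qed

lemma minimal_homeo_no_isolated_points:
  fixes h :: "'a::topological_space \<Rightarrow> 'a" and x :: 'a
  assumes "compact (UNIV :: 'a set)" "infinite (UNIV :: 'a set)" "minimal_homeo h"
  shows "\<not> open {x}"
proof -
  define I where "I = {x :: 'a. open {x}}"
  obtain g where hg: "homeomorphism UNIV UNIV h g"
    using assms(3) unfolding minimal_homeo_def by blast
  have hg_inverse: "h (g y) = y" "g (h y) = y" for y
    using homeomorphism_apply1[OF hg] homeomorphism_apply2[OF hg] by simp_all
  have "h ` I = I"
  proof
    show "h ` I \<subseteq> I"
      using homeomorphism_open_singleton_iff[OF hg] by (auto simp: I_def)
    show "I \<subseteq> h ` I"
    proof
      fix y assume "y \<in> I"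
      then have "g y \<in> I"
        using homeomorphism_open_singleton_iff[OF hg, of "g y"] by (simp add: I_def hg_inverse)
      then show "y \<in> h ` I"
        using hg_inverse(1)[of y] by (metis image_eqI)
    qed
  qed
  moreover have "bij h"
    by (rule o_bij[of g]) (simp_all add: fun_eq_iff hg_inverse)
  ultimately have "h ` (- I) = - I"
    by (simp add: bij_image_Compl_eq)
  moreover have "closed (- I)"
  proof -
    have "open (\<Union>y\<in>I. {y})"
      by (rule open_UN) (simp add: I_def)
    then show ?thesis
      by (intro closed_Compl) simp
  qed
  moreover have "\<And>E. closed E \<Longrightarrow> h ` E = E \<Longrightarrow> E = {} \<or> E = UNIV"
    using assms(3) by (simp add: minimal_homeo_def)
  ultimately have "- I = {} \<or> - I = UNIV"
    by blast
  moreover have "I \<noteq> UNIV"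
  proof
    assume "I = UNIV"
    then have "finite (UNIV \<inter> UNIV :: 'a set)"
      using assms(1) by (intro finite_not_islimpt_in_compact) (auto simp: I_def islimpt_UNIV_iff)
    then show False
      using assms(2) by simp
  qed
  ultimately have "I = {}"
    by auto
  then show ?thesis
    by (simp add: I_def)
qed

lemma open_contains_disjoint_open_pair:
  fixes U :: "'a::t2_space set"
  assumes "\<And>x::'a. \<not> open {x}" "open U" "U \<noteq> {}"
  obtains V1 V2 where "open V1" "open V2" "V1 \<noteq> {}" "V2 \<noteq> {}" "V1 \<inter> V2 = {}"
    "V1 \<subseteq> U" "V2 \<subseteq> U"
proof -
  obtain y where y: "y \<in> U"
    using assms(3) by auto
  then obtain z where z: "z \<in> U" "z \<noteq> y"
    using assms(1)[of y] assms(2) by (metis subsetI singleton_iff subset_antisym)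
  obtain A B where "open A" "open B" "y \<in> A" "z \<in> B" "A \<inter> B = {}"
    using separation_t2 z(2) by metis
  with y z show ?thesis
    using that[of "A \<inter> U" "B \<inter> U"] assms(2) by blast
qed

lemma thin_Un:
  fixes h :: "'a::t2_space \<Rightarrow> 'a"
  assumes "\<And>x::'a. \<not> open {x}" "thin h A" "thin h B"
  shows "thin h (A \<union> B)"
  unfolding thin_def
proof (intro conjI allI impI)
  show "closed (A \<union> B)"
    using assms(2,3) unfolding thin_def by (intro closed_Un) simp_all
  fix U :: "'a set"
  assume "open U \<and> U \<noteq> {}"
  then have "open U" "U \<noteq> {}"
    by simp_all
  then obtain V1 V2 where V: "open V1" "open V2" "V1 \<noteq> {}" "V2 \<noteq> {}" "V1 \<inter> V2 = {}"
    "V1 \<subseteq> U" "V2 \<subseteq> U"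
    by (rule open_contains_disjoint_open_pair[OF assms(1)])
  have "prec h A V1" "prec h B V2"
    using assms(2,3) V(1-4) by (simp_all add: thin_def)
  then have "prec h (A \<union> B) (V1 \<union> V2)"
    using V(5) by (rule prec_Un)
  then show "prec h (A \<union> B) U"
    using V(6,7) by (simp add: prec_mono)
qed

lemma thin_Union:
  fixes h :: "'a::t2_space \<Rightarrow> 'a"
  assumes "\<And>x::'a. \<not> open {x}" "finite \<F>" "\<forall>F\<in>\<F>. thin h F"
  shows "thin h (\<Union>\<F>)"
  using assms(2,3)
proof (induction \<F> rule: finite_induct)
  case empty
  then show ?case
    by (simp add: thin_def prec_empty)
next
  case (insert F \<F>)
  then show ?case
    using thin_Un[OF assms(1)] by simp
qed

theorem lemma3p7:
  fixes h :: "'a::metric_space \<Rightarrow> 'a"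
  assumes "compact (UNIV :: 'a set)"
    and "infinite (UNIV :: 'a set)"
    and "minimal_homeo h"
  shows "(\<forall>F1 F2 V1 V2. closed F1 \<and> closed F2 \<and> open V1 \<and> open V2 \<and>
            prec h F1 V1 \<and> prec h F2 V2 \<and> V1 \<inter> V2 = {}
            \<longrightarrow> prec h (F1 \<union> F2) (V1 \<union> V2))
       \<and> (\<forall>\<F>. finite \<F> \<and> (\<forall>F\<in>\<F>. thin h F) \<longrightarrow> thin h (\<Union>\<F>))"
proof (intro conjI allI impI)
  fix F1 F2 V1 V2 :: "'a set"
  assume "closed F1 \<and> closed F2 \<and> open V1 \<and> open V2 \<and>
    prec h F1 V1 \<and> prec h F2 V2 \<and> V1 \<inter> V2 = {}"
  then show "prec h (F1 \<union> F2) (V1 \<union> V2)"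
    by (intro prec_Un) simp_all
next
  fix \<F> :: "'a set set"
  assume "finite \<F> \<and> (\<forall>F\<in>\<F>. thin h F)"
  then show "thin h (\<Union>\<F>)"
    using minimal_homeo_no_isolated_points[OF assms] by (intro thin_Union) simp_all
qed

end
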